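(* There is an integer $n_0\ge 3$ such that every connected graph $H$ with $n\ge n_0$ vertices has geometric pebbling threshold at most $$\frac{2^{\sqrt{2\log_2 n}}\, e}{2\sqrt{\log_2 n}}\left(1-(\log_2 n)^{-1/4}\right)^{-1} n.$$
   Context: Pebbling: a distribution on a graph assigns a nonnegative integer number of pebbles to each vertex. A pebbling move removes two pebbles from a vertex having at least two pebbles and adds one pebble to an adjacent vertex. A vertex is pebblable if some sequence of pebbling moves from the distribution ends with at least one pebble on it; a distribution is solvable if every vertex is pebblable. The geometric distribution on $\{0,1,2,\dots\}$ with parameter $0<p\le 1$ assigns probability $p(1-p)^k$ to $k$. For a graph $H$ with $n>0$ vertices, the geometric pebbling threshold of $H$ is the unique positive real $x$ such that, if an independent geometrically distributed number of pebbles with parameter $(1+x/n)^{-1}$ is placed on each vertex of $H$, the probability that the distribution is solvable equals $\tfrac12$. *)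

theory Defs
  imports "HOL-Probability.Probability"
begin

definition simple_graph :: "nat set \<Rightarrow> (nat \<Rightarrow> nat \<Rightarrow> bool) \<Rightarrow> bool" where
  "simple_graph V E \<longleftrightarrow> finite V \<and> (\<forall>u v. E u v \<longrightarrow> u \<in> V \<and> v \<in> V)
     \<and> (\<forall>u v. E u v \<longrightarrow> E v u) \<and> (\<forall>v. \<not> E v v)"

definition connected_graph :: "nat set \<Rightarrow> (nat \<Rightarrow> nat \<Rightarrow> bool) \<Rightarrow> bool" where
  "connected_graph V E \<longleftrightarrow> (\<forall>u\<in>V. \<forall>v\<in>V. E\<^sup>*\<^sup>* u v)"

definition pebbling_move ::
  "(nat \<Rightarrow> nat \<Rightarrow> bool) \<Rightarrow> (nat \<Rightarrow> nat) \<Rightarrow> (nat \<Rightarrow> nat) \<Rightarrow> bool" where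
  "pebbling_move E D D' \<longleftrightarrow> (\<exists>v u. E v u \<and> D v \<ge> 2 \<and>
      D' = (D(v := D v - 2))(u := D u + 1))"

definition pebblable :: "(nat \<Rightarrow> nat \<Rightarrow> bool) \<Rightarrow> (nat \<Rightarrow> nat) \<Rightarrow> nat \<Rightarrow> bool" where
  "pebblable E D r \<longleftrightarrow> (\<exists>D'. (pebbling_move E)\<^sup>*\<^sup>* D D' \<and> D' r \<ge> 1)"

definition solvable :: "nat set \<Rightarrow> (nat \<Rightarrow> nat \<Rightarrow> bool) \<Rightarrow> (nat \<Rightarrow> nat) \<Rightarrow> bool" where
  "solvable V E D \<longleftrightarrow> (\<forall>r\<in>V. pebblable E D r)"

definition solv_prob :: "nat set \<Rightarrow> (nat \<Rightarrow> nat \<Rightarrow> bool) \<Rightarrow> real \<Rightarrow> real" where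
  "solv_prob V E p = measure_pmf.prob (Pi_pmf V 0 (\<lambda>_. geometric_pmf p)) {D. solvable V E D}"

definition geom_threshold :: "nat set \<Rightarrow> (nat \<Rightarrow> nat \<Rightarrow> bool) \<Rightarrow> real" where
  "geom_threshold V E = (THE x. x > 0 \<and>
      solv_prob V E (inverse (1 + x / real (card V))) = 1/2)"

end

theory Submission
  imports Defs "HOL-Real_Asymp.Real_Asymp"
begin

text \<open>A distribution is unsolvable only if some root r cannot be reached. Let
  m = \<lfloor>sqrt (2 log2 n)\<rfloor>. If some path starts at r and has m vertices, then the pebbles on it,
  weighted by 2 ^ -j at distance j from r, weigh less than 1, since otherwise they could be
  moved to r along the path; by a Chernoff bound this has probability at most 1/(4n) for each r. If
  there is no such path, every vertex is within distance m - 2 of r, so no vertex carries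
  2 ^ (m - 2) pebbles, which is very unlikely among n independent vertices. At the stated
  parameter both failure probabilities are at most 1/4. Finally the unsolvable distributions form
  a down-closed family, which makes the probability of solvability strictly increasing in the
  mean number of pebbles, so the threshold lies below the stated value.\<close>

section \<open>Pebbling along paths\<close>

lemma pebbling_move_mono:
  assumes "pebbling_move E D D2" "D \<le> D'"
  obtains D2' where "pebbling_move E D' D2'" "D2 \<le> D2'"
proof -
  from assms(1) obtain v u where vu: "E v u" "2 \<le> D v" "D2 = (D(v := D v - 2))(u := D u + 1)"
    unfolding pebbling_move_def by blast
  let ?D2' = "(D'(v := D' v - 2))(u := D' u + 1)"
  have "D v \<le> D' v" using assms(2) by (simp add: le_fun_def)
  then have "pebbling_move E D' ?D2'"
    unfolding pebbling_move_def using vu by (intro exI[of _ v] exI[of _ u]) simp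
  moreover have "D2 \<le> ?D2'"
  proof (rule le_funI)
    fix x
    show "D2 x \<le> ?D2' x" using le_funD[OF assms(2)] unfolding vu(3) by (simp add: diff_le_mono)
  qed
  ultimately show thesis by (rule that)
qed

lemma pebbling_moves_mono:
  assumes "(pebbling_move E)\<^sup>*\<^sup>* D D2" "D \<le> D'"
  shows "\<exists>D2'. (pebbling_move E)\<^sup>*\<^sup>* D' D2' \<and> D2 \<le> D2'"
  using assms(1)
proof (induction rule: rtranclp_induct)
  case base
  show ?case using assms(2) by blast
next
  case (step D1 D2)
  then obtain D1' where "(pebbling_move E)\<^sup>*\<^sup>* D' D1'" "D1 \<le> D1'" by blast
  moreover obtain D2' where "pebbling_move E D1' D2'" "D2 \<le> D2'"
    using pebbling_move_mono[OF step.hyps(2) \<open>D1 \<le> D1'\<close>] by blast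
  ultimately show ?case by (meson rtranclp.rtrancl_into_rtrancl)
qed

lemma pebblable_mono:
  assumes "pebblable E D r" "D \<le> D'"
  shows "pebblable E D' r"
proof -
  obtain D2 where D2: "(pebbling_move E)\<^sup>*\<^sup>* D D2" "1 \<le> D2 r"
    using assms(1) unfolding pebblable_def by blast
  obtain D2' where D2': "(pebbling_move E)\<^sup>*\<^sup>* D' D2'" "D2 \<le> D2'"
    using pebbling_moves_mono[OF D2(1) assms(2)] by blast
  have "1 \<le> D2' r" using D2(2) le_funD[OF D2'(2), of r] by simp
  then show ?thesis unfolding pebblable_def using D2'(1) by blast
qed

lemma solvable_mono: "solvable V E D \<Longrightarrow> D \<le> D' \<Longrightarrow> solvable V E D'"
  unfolding solvable_def using pebblable_mono[of E D _ D'] by simp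

lemma pebbling_moves_repeat:
  assumes "E v u" "v \<noteq> u" "2 * c \<le> D v"
  shows "(pebbling_move E)\<^sup>*\<^sup>* D ((D(v := D v - 2 * c))(u := D u + c))"
  using assms(3)
proof (induction c)
  case 0
  then show ?case by (simp add: fun_upd_idem)
next
  case (Suc c)
  let ?D1 = "(D(v := D v - 2 * c))(u := D u + c)"
  have "(pebbling_move E)\<^sup>*\<^sup>* D ?D1"
    using Suc.prems by (intro Suc.IH) simp
  moreover have "pebbling_move E ?D1 ((D(v := D v - 2 * Suc c))(u := D u + Suc c))"
    unfolding pebbling_move_def using assms Suc.prems
    by (intro exI[of _ v] exI[of _ u]) (auto simp: fun_eq_iff)
  ultimately show ?case by (meson rtranclp.rtrancl_into_rtrancl)
qed

text \<open>Edges point towards the head us ! 0, the direction in which pebbles are moved.\<close>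

definition walk :: "(nat \<Rightarrow> nat \<Rightarrow> bool) \<Rightarrow> nat list \<Rightarrow> bool" where
  "walk E us \<longleftrightarrow> (\<forall>j. Suc j < length us \<longrightarrow> E (us ! Suc j) (us ! j))"

lemma walk_take: "walk E us \<Longrightarrow> walk E (take k us)"
  unfolding walk_def by auto

text \<open>Passing the pebbles of the last vertex two-for-one to its predecessor halves both the
  weighted sum and the target 2 ^ k, up to rounding.\<close>

lemma pebblable_along_walk:
  assumes "length us = Suc k" "distinct us" "walk E us"
    and "2 ^ k \<le> (\<Sum>j\<le>k. D (us ! j) * 2 ^ (k - j))"
  shows "pebblable E D (us ! 0)"
  using assms
proof (induction k arbitrary: us D)
  case 0
  then show ?case unfolding pebblable_def by auto
next
  case (Suc k)
  define a where "a = us ! Suc k"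
  define b where "b = us ! k"
  define c where "c = D a div 2"
  define D' where "D' = (D(a := D a - 2 * c))(b := D b + c)"
  have "a \<noteq> b" using Suc.prems unfolding a_def b_def by (simp add: nth_eq_iff_index_eq)
  moreover have "E a b" using Suc.prems unfolding walk_def a_def b_def by auto
  ultimately have moves: "(pebbling_move E)\<^sup>*\<^sup>* D D'"
    unfolding D'_def by (intro pebbling_moves_repeat) (simp_all add: c_def)
  have D': "D' (us ! j) = D (us ! j) + (if j = k then c else 0)" if "j \<le> k" for j
  proof -
    have "us ! j \<noteq> a" "j \<noteq> k \<Longrightarrow> us ! j \<noteq> b"
      using Suc.prems that unfolding a_def b_def by (simp_all add: nth_eq_iff_index_eq)
    then show ?thesis unfolding D'_def b_def by auto
  qed
  have "(\<Sum>j\<le>k. D' (take (Suc k) us ! j) * 2 ^ (k - j)) = (\<Sum>j\<le>k. D (us ! j) * 2 ^ (k - j)) + c"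
  proof -
    have "(\<Sum>j\<le>k. D' (take (Suc k) us ! j) * 2 ^ (k - j))
            = (\<Sum>j\<le>k. D (us ! j) * 2 ^ (k - j) + (if j = k then c else 0))"
      by (intro sum.cong) (auto simp: D')
    then show ?thesis by (simp add: sum.distrib)
  qed
  moreover have "(\<Sum>j\<le>Suc k. D (us ! j) * 2 ^ (Suc k - j))
                   = 2 * (\<Sum>j\<le>k. D (us ! j) * 2 ^ (k - j)) + D a"
    by (simp add: a_def sum_distrib_left Suc_diff_le algebra_simps)
  ultimately have "2 ^ k \<le> (\<Sum>j\<le>k. D' (take (Suc k) us ! j) * 2 ^ (k - j))"
    using Suc.prems(4) unfolding c_def by simp
  with Suc.prems have "pebblable E D' (take (Suc k) us ! 0)"
    by (intro Suc.IH) (simp_all add: walk_take)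
  then obtain D2 where "(pebbling_move E)\<^sup>*\<^sup>* D' D2" "1 \<le> D2 (us ! 0)"
    unfolding pebblable_def by auto
  with moves show ?case unfolding pebblable_def using rtranclp_trans by fast
qed

definition path_from :: "(nat \<Rightarrow> nat \<Rightarrow> bool) \<Rightarrow> nat set \<Rightarrow> nat \<Rightarrow> nat list \<Rightarrow> bool" where
  "path_from E V r us \<longleftrightarrow> us \<noteq> [] \<and> us ! 0 = r \<and> distinct us \<and> walk E us \<and> set us \<subseteq> V"

lemma path_from_take: "path_from E V r us \<Longrightarrow> 0 < k \<Longrightarrow> path_from E V r (take k us)"
  unfolding path_from_def by (auto simp: walk_take dest: in_set_takeD)

lemma path_from_snoc:
  assumes "path_from E V r us" "v \<in> V" "v \<notin> set us" "E v (last us)"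
  shows "path_from E V r (us @ [v])"
proof -
  have "walk E (us @ [v])"
    unfolding walk_def
  proof (intro allI impI)
    fix j assume j: "Suc j < length (us @ [v])"
    show "E ((us @ [v]) ! Suc j) ((us @ [v]) ! j)"
    proof (cases "Suc j < length us")
      case True
      then show ?thesis using assms(1) by (auto simp: path_from_def walk_def nth_append)
    next
      case False
      then have "Suc j = length us" using j by simp
      moreover have "us \<noteq> []" using assms(1) by (simp add: path_from_def)
      ultimately have "last us = us ! j" by (metis diff_Suc_1 last_conv_nth)
      then show ?thesis using assms(4) \<open>Suc j = length us\<close> by (simp add: nth_append)
    qed
  qed
  then show ?thesis using assms(1-3) by (auto simp: path_from_def nth_append)
qed

lemma connected_path_from:
  assumes "simple_graph V E" "connected_graph V E" "r \<in> V" "v \<in> V"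
  obtains us where "path_from E V r us" "last us = v"
proof -
  have "E\<^sup>*\<^sup>* r v" using assms unfolding connected_graph_def by blast
  then have "\<exists>us. path_from E V r us \<and> last us = v"
  proof (induction rule: rtranclp_induct)
    case base
    show ?case using assms(3) by (intro exI[of _ "[r]"]) (simp add: path_from_def walk_def)
  next
    case (step w v)
    then obtain us where us: "path_from E V r us" "last us = w" by blast
    have "v \<in> V" "E v w" using assms(1) step.hyps(2) unfolding simple_graph_def by blast+
    show ?case
    proof (cases "v \<in> set us")
      case True
      then obtain i where i: "i < length us" "us ! i = v" by (auto simp: in_set_conv_nth)
      then have "last (take (Suc i) us) = v" by (simp add: take_Suc_conv_app_nth)
      then show ?thesis using path_from_take[OF us(1), of "Suc i"] by blast
    next
      case False
      then show ?thesis using path_from_snoc[OF us(1) \<open>v \<in> V\<close>] us(2) \<open>E v w\<close> by auto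
    qed
  qed
  then show thesis using that by blast
qed

text \<open>If no path from r has m vertices, every vertex is within distance m - 2 of r.\<close>

lemma pebblable_if_no_long_path:
  assumes "simple_graph V E" "connected_graph V E" "r \<in> V" "v \<in> V" "0 < m"
    and no_path: "\<nexists>us. path_from E V r us \<and> length us = m"
    and rich: "2 ^ (m - 2) \<le> D v"
  shows "pebblable E D r"
proof -
  obtain us where us: "path_from E V r us" "last us = v"
    using connected_path_from[OF assms(1-4)] .
  then obtain k where k: "length us = Suc k" unfolding path_from_def by (cases us) auto
  have "\<not> m \<le> length us"
    using no_path path_from_take[OF us(1) \<open>0 < m\<close>] by auto
  then have "(2::nat) ^ k \<le> 2 ^ (m - 2)" using k by (intro power_increasing) auto
  also have "\<dots> \<le> D (us ! k)" using rich us k by (simp add: path_from_def last_conv_nth)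
  also have "\<dots> = D (us ! k) * 2 ^ (k - k)" by simp
  also have "\<dots> \<le> (\<Sum>j\<le>k. D (us ! j) * 2 ^ (k - j))" by (rule member_le_sum) auto
  finally have "pebblable E D (us ! 0)"
    using us(1) k by (intro pebblable_along_walk) (auto simp: path_from_def)
  then show ?thesis using us(1) by (simp add: path_from_def)
qed

lemma solvable_if_rich_vertex:
  assumes G: "simple_graph V E" "connected_graph V E" and "v \<in> V" "2 ^ card V \<le> D v"
  shows "solvable V E D"
  unfolding solvable_def
proof
  fix r assume "r \<in> V"
  have "length us \<le> card V" if "path_from E V r us" for us
    using that G(1) distinct_card[of us] card_mono[of V "set us"]
    unfolding path_from_def simple_graph_def by auto
  then have "\<nexists>us. path_from E V r us \<and> length us = card V + 2" by force
  then show "pebblable E D r"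
    using pebblable_if_no_long_path[OF G \<open>r \<in> V\<close> assms(3), of "card V + 2"] assms(4) by simp
qed

section \<open>Monotonicity in the parameter\<close>

definition unsolvable :: "nat set \<Rightarrow> (nat \<Rightarrow> nat \<Rightarrow> bool) \<Rightarrow> (nat \<Rightarrow> nat) set" where
  "unsolvable V E = {D. (\<forall>x. x \<notin> V \<longrightarrow> D x = 0) \<and> \<not> solvable V E D}"

definition down_closed :: "nat set \<Rightarrow> (nat \<Rightarrow> nat) set \<Rightarrow> bool" where
  "down_closed V F \<longleftrightarrow> (\<forall>D\<in>F. \<forall>v\<in>V. 1 \<le> D v \<longrightarrow> D(v := D v - 1) \<in> F)"

lemma finite_unsolvable:
  assumes G: "simple_graph V E" "connected_graph V E"
  shows "finite (unsolvable V E)"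
proof (rule finite_subset)
  show "unsolvable V E \<subseteq> PiE_dflt V 0 (\<lambda>_. {..<(2::nat) ^ card V})"
    using solvable_if_rich_vertex[OF G] unfolding unsolvable_def PiE_dflt_def
    by (auto simp: not_less[symmetric])
  show "finite (PiE_dflt V 0 (\<lambda>_. {..<(2::nat) ^ card V}))"
    using G(1) unfolding simple_graph_def by (intro finite_PiE_dflt) auto
qed

lemma zero_in_unsolvable:
  assumes "V \<noteq> {}"
  shows "(\<lambda>_. 0) \<in> unsolvable V E"
proof -
  have "(pebbling_move E)\<^sup>*\<^sup>* (\<lambda>_. 0) D \<Longrightarrow> D = (\<lambda>_. 0)" for D
    by (induction rule: rtranclp_induct) (auto simp: pebbling_move_def)
  then show ?thesis using assms unfolding unsolvable_def solvable_def pebblable_def by fastforce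
qed

lemma down_closed_unsolvable: "down_closed V (unsolvable V E)"
  unfolding down_closed_def
proof (intro ballI impI)
  fix D v assume "D \<in> unsolvable V E" "v \<in> V" "1 \<le> D v"
  moreover have "D(v := D v - 1) \<le> D" by (simp add: le_fun_def)
  ultimately show "D(v := D v - 1) \<in> unsolvable V E"
    unfolding unsolvable_def by (auto dest: solvable_mono)
qed

definition pebble_count :: "nat set \<Rightarrow> (nat \<Rightarrow> nat) \<Rightarrow> nat" where
  "pebble_count V D = (\<Sum>v\<in>V. D v)"

text \<open>For F supported on V, the probability of F when every vertex of V independently receives
  geometric(1 - s) pebbles; as a polynomial in s it is defined for all real s.\<close>

definition geom_family_prob :: "nat set \<Rightarrow> (nat \<Rightarrow> nat) set \<Rightarrow> real \<Rightarrow> real" where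
  "geom_family_prob V F s = (\<Sum>D\<in>F. (1 - s) ^ card V * s ^ pebble_count V D)"

lemma solv_prob_eq:
  assumes G: "simple_graph V E" "connected_graph V E" and q: "0 < q" "q \<le> 1"
  shows "solv_prob V E q = 1 - geom_family_prob V (unsolvable V E) (1 - q)"
proof -
  define M where "M = Pi_pmf V 0 (\<lambda>_. geometric_pmf q)"
  have fV: "finite V" using G(1) unfolding simple_graph_def by blast
  have "set_pmf M \<subseteq> {D. \<forall>x. x \<notin> V \<longrightarrow> D x = 0}"
    unfolding M_def by (rule set_Pi_pmf_subset[OF fV])
  then have "(UNIV - {D. solvable V E D}) \<inter> set_pmf M = unsolvable V E \<inter> set_pmf M"
    unfolding unsolvable_def by auto
  then have "measure_pmf.prob M (UNIV - {D. solvable V E D}) = measure_pmf.prob M (unsolvable V E)"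
    by (metis measure_Int_set_pmf)
  also have "\<dots> = (\<Sum>D\<in>unsolvable V E. pmf M D)"
    by (rule measure_measure_pmf_finite[OF finite_unsolvable[OF G]])
  also have "\<dots> = geom_family_prob V (unsolvable V E) (1 - q)"
    unfolding geom_family_prob_def
  proof (intro sum.cong refl)
    fix D assume "D \<in> unsolvable V E"
    then have "pmf M D = (\<Prod>v\<in>V. (1 - q) ^ D v * q)"
      unfolding M_def using q by (subst pmf_Pi[OF fV]) (auto simp: unsolvable_def)
    also have "\<dots> = (1 - (1 - q)) ^ card V * (1 - q) ^ pebble_count V D"
      unfolding pebble_count_def by (simp add: prod.distrib power_sum)
    finally show "pmf M D = (1 - (1 - q)) ^ card V * (1 - q) ^ pebble_count V D" .
  qed
  finally show ?thesis
    unfolding solv_prob_def M_def using measure_pmf.prob_compl[of "{D. solvable V E D}"] by simp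
qed

lemma pebble_count_add_pebble:
  "finite V \<Longrightarrow> v \<in> V \<Longrightarrow> pebble_count V (D(v := D v + 1)) = pebble_count V D + 1"
  unfolding pebble_count_def by (simp add: sum.remove)

lemma sum_pebbles_at_vertex:
  fixes s :: real
  assumes "finite V" "v \<in> V" "down_closed V F"
  shows "(\<Sum>D\<in>{D\<in>F. 1 \<le> D v}. D v * s ^ pebble_count V D)
       = (\<Sum>D\<in>{D\<in>F. D(v := D v + 1) \<in> F}. (D v + 1) * s ^ (pebble_count V D + 1))"
proof -
  have "bij_betw (\<lambda>D. D(v := D v + 1)) {D\<in>F. D(v := D v + 1) \<in> F} {D\<in>F. 1 \<le> D v}"
  proof (rule bij_betwI[where g = "\<lambda>D. D(v := D v - 1)"])
    show "(\<lambda>D. D(v := D v - 1)) \<in> {D\<in>F. 1 \<le> D v} \<rightarrow> {D\<in>F. D(v := D v + 1) \<in> F}"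
      using assms(2,3) unfolding down_closed_def by (auto simp: fun_upd_idem)
  qed (auto simp: fun_eq_iff)
  then show ?thesis
    using pebble_count_add_pebble[OF assms(1,2)]
    by (simp add: sum.reindex_bij_betw[symmetric] add.commute)
qed

text \<open>The pebbles of F are counted by adding one pebble in all possible ways to members of F;
  the inequality is strict because a member with the most pebbles at v0 cannot receive one there.\<close>

lemma down_closed_count_less:
  fixes s :: real
  assumes V: "finite V" "v0 \<in> V" and F: "finite F" "F \<noteq> {}" "down_closed V F" and "0 < s"
  shows "(\<Sum>D\<in>F. pebble_count V D * s ^ pebble_count V D)
       < (\<Sum>D\<in>F. (pebble_count V D + card V) * s ^ (pebble_count V D + 1))"
proof -
  define h where "h v D = (D v + 1) * s ^ (pebble_count V D + 1)" for v D
  define G where "G v = {D\<in>F. D(v := D v + 1) \<in> F}" for v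
  have h_pos: "0 < h v D" for v D using \<open>0 < s\<close> by (simp add: h_def)
  have G_F: "G v \<subseteq> F" for v unfolding G_def by auto
  obtain D0 where D0: "D0 \<in> F" "\<And>D. D \<in> F \<Longrightarrow> D v0 \<le> D0 v0"
  proof -
    have "Max ((\<lambda>D. D v0) ` F) \<in> (\<lambda>D. D v0) ` F" using F(1,2) by (intro Max_in) auto
    then obtain D0 where "D0 \<in> F" "D0 v0 = Max ((\<lambda>D. D v0) ` F)" by auto
    then show thesis using that F(1) by simp
  qed
  have "D0 \<notin> G v0" using D0 unfolding G_def by fastforce
  then have "(\<Sum>D\<in>G v0. h v0 D) < (\<Sum>D\<in>F. h v0 D)"
    using D0(1) F(1) G_F h_pos by (intro sum_strict_mono2) (auto intro: less_imp_le)
  moreover have "(\<Sum>D\<in>G v. h v D) \<le> (\<Sum>D\<in>F. h v D)" for v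
    using F(1) G_F h_pos by (intro sum_mono2) (auto intro: less_imp_le)
  ultimately have less: "(\<Sum>v\<in>V. \<Sum>D\<in>G v. h v D) < (\<Sum>v\<in>V. \<Sum>D\<in>F. h v D)"
    using V by (intro sum_strict_mono_ex1) auto
  have "(\<Sum>D\<in>F. pebble_count V D * s ^ pebble_count V D)
          = (\<Sum>v\<in>V. \<Sum>D\<in>{D\<in>F. 1 \<le> D v}. D v * s ^ pebble_count V D)"
    unfolding pebble_count_def of_nat_sum sum_distrib_right
    by (subst sum.swap) (intro sum.cong refl sum.mono_neutral_right; use F(1) in auto)
  also have "\<dots> = (\<Sum>v\<in>V. \<Sum>D\<in>G v. h v D)"
    unfolding G_def h_def using sum_pebbles_at_vertex[OF V(1) _ F(3)] by simp
  also note less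
  also have "(\<Sum>v\<in>V. \<Sum>D\<in>F. h v D) = (\<Sum>D\<in>F. (pebble_count V D + card V) * s ^ (pebble_count V D + 1))"
    unfolding h_def pebble_count_def by (subst sum.swap) (simp add: sum_distrib_right[symmetric] sum.distrib)
  finally show ?thesis .
qed

lemma has_real_derivative_geom_term:
  fixes x :: real
  assumes "0 < n" "x \<noteq> 0"
  shows "((\<lambda>s. (1 - s) ^ n * s ^ k) has_real_derivative
           (1 - x) ^ (n - 1) / x * (k * x ^ k - (k + n) * x ^ (k + 1))) (at x)"
proof -
  obtain n' where n: "n = Suc n'" using assms(1) by (cases n) auto
  show ?thesis
    unfolding n diff_Suc_1
    by (rule derivative_eq_intros refl)+ (use assms(2) in \<open>cases k; simp add: field_simps\<close>)
qed

lemma geom_family_prob_strict_decreasing: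
  assumes V: "finite V" "v0 \<in> V" and F: "finite F" "F \<noteq> {}" "down_closed V F"
    and "0 \<le> a" "a < b" "b \<le> 1"
  shows "geom_family_prob V F b < geom_family_prob V F a"
proof (rule DERIV_neg_imp_decreasing_open[OF \<open>a < b\<close>])
  show "continuous_on {a..b} (geom_family_prob V F)"
    unfolding geom_family_prob_def by (intro continuous_intros)
  fix x :: real assume x: "a < x" "x < b"
  then have x01: "0 < x" "x < 1" using \<open>0 \<le> a\<close> \<open>b \<le> 1\<close> by auto
  have "0 < card V" using V by (auto simp: card_gt_0_iff)
  define c where "c D = pebble_count V D" for D
  have "DERIV (geom_family_prob V F) x :>
          (1 - x) ^ (card V - 1) / x * ((\<Sum>D\<in>F. c D * x ^ c D) - (\<Sum>D\<in>F. (c D + card V) * x ^ (c D + 1)))"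
    unfolding geom_family_prob_def c_def[symmetric]
    by (rule DERIV_cong[OF DERIV_sum[OF has_real_derivative_geom_term[OF \<open>0 < card V\<close>]]])
       (use x01 in \<open>simp_all add: right_diff_distrib sum_distrib_left sum_subtractf\<close>)
  moreover have "(\<Sum>D\<in>F. c D * x ^ c D) - (\<Sum>D\<in>F. (c D + card V) * x ^ (c D + 1)) < 0"
    using down_closed_count_less[OF V F \<open>0 < x\<close>] unfolding c_def by simp
  ultimately show "\<exists>y. DERIV (geom_family_prob V F) x :> y \<and> y < 0"
    using x01 by (meson divide_pos_pos mult_pos_neg zero_less_power diff_gt_0_iff_gt)
qed

lemma solv_prob_mean_eq:
  fixes x :: real
  assumes G: "simple_graph V E" "connected_graph V E" and "V \<noteq> {}" "0 \<le> x"
  shows "solv_prob V E (inverse (1 + x / card V))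
           = 1 - geom_family_prob V (unsolvable V E) (x / (card V + x))"
proof -
  have "0 < card V" using G(1) \<open>V \<noteq> {}\<close> by (simp add: simple_graph_def card_gt_0_iff)
  then have "0 < inverse (1 + x / card V)" "inverse (1 + x / card V) \<le> 1"
    and "1 - inverse (1 + x / card V) = x / (card V + x)"
    using \<open>0 \<le> x\<close> by (auto simp: field_simps)
  then show ?thesis using solv_prob_eq[OF G] by simp
qed

lemma solv_prob_mean_strict_mono:
  fixes x y :: real
  assumes G: "simple_graph V E" "connected_graph V E" and "V \<noteq> {}" "0 \<le> x" "x < y"
  shows "solv_prob V E (inverse (1 + x / card V)) < solv_prob V E (inverse (1 + y / card V))"
proof -
  have "finite V" using G(1) by (simp add: simple_graph_def)
  then have "0 < card V" using \<open>V \<noteq> {}\<close> by (simp add: card_gt_0_iff)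
  obtain v0 where "v0 \<in> V" using \<open>V \<noteq> {}\<close> by blast
  have "geom_family_prob V (unsolvable V E) (y / (card V + y))
          < geom_family_prob V (unsolvable V E) (x / (card V + x))"
    using finite_unsolvable[OF G] zero_in_unsolvable[OF \<open>V \<noteq> {}\<close>] down_closed_unsolvable
      \<open>0 < card V\<close> assms(4,5)
    by (intro geom_family_prob_strict_decreasing[OF \<open>finite V\<close> \<open>v0 \<in> V\<close>])
       (auto simp: field_simps)
  then show ?thesis
    using solv_prob_mean_eq[OF G \<open>V \<noteq> {}\<close>, of x] solv_prob_mean_eq[OF G \<open>V \<noteq> {}\<close>, of y] assms(4,5)
    by simp
qed

text \<open>Since the success probability is continuous and strictly increasing in x and vanishes at 0,
  the value x defining geom_threshold exists and is unique.\<close>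

lemma geom_threshold_le:
  assumes G: "simple_graph V E" "connected_graph V E" and "V \<noteq> {}" "0 < b"
    and half: "1/2 \<le> solv_prob V E (inverse (1 + b / card V))"
  shows "geom_threshold V E \<le> b"
proof -
  define \<psi> where "\<psi> x = 1 - geom_family_prob V (unsolvable V E) (x / (card V + x))" for x :: real
  have \<psi>_eq: "solv_prob V E (inverse (1 + x / card V)) = \<psi> x" if "0 \<le> x" for x
    unfolding \<psi>_def using solv_prob_mean_eq[OF G \<open>V \<noteq> {}\<close> that] by simp
  have "1 \<le> geom_family_prob V (unsolvable V E) 0"
    unfolding geom_family_prob_def
    using member_le_sum[of "\<lambda>_. 0" _ "\<lambda>D. (1 - 0) ^ card V * (0::real) ^ pebble_count V D"]
      finite_unsolvable[OF G] zero_in_unsolvable[OF \<open>V \<noteq> {}\<close>]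
    by (simp add: pebble_count_def)
  then have "\<psi> 0 \<le> 0" unfolding \<psi>_def by simp
  moreover have "1/2 \<le> \<psi> b" using half \<psi>_eq[of b] \<open>0 < b\<close> by simp
  moreover have "continuous_on {0..b} \<psi>"
  proof -
    have "0 < card V" using G(1) \<open>V \<noteq> {}\<close> by (simp add: simple_graph_def card_gt_0_iff)
    then show ?thesis unfolding \<psi>_def geom_family_prob_def by (intro continuous_intros) auto
  qed
  ultimately obtain x where x: "0 \<le> x" "x \<le> b" "\<psi> x = 1/2"
    using IVT'[of \<psi> 0 "1/2" b] \<open>0 < b\<close> by auto
  with \<open>\<psi> 0 \<le> 0\<close> have "0 < x" by (cases "x = 0") auto
  have "\<psi> y = 1/2 \<longleftrightarrow> y = x" if "0 < y" for y
    using solv_prob_mean_strict_mono[OF G \<open>V \<noteq> {}\<close>, of x y] x that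
      solv_prob_mean_strict_mono[OF G \<open>V \<noteq> {}\<close>, of y x] \<psi>_eq[of x] \<psi>_eq[of y]
    by (cases x y rule: linorder_cases) auto
  then have "\<exists>!y. 0 < y \<and> solv_prob V E (inverse (1 + y / card V)) = 1/2"
    using \<open>0 < x\<close> \<psi>_eq by (metis less_eq_real_def)
  then have "geom_threshold V E = x"
    unfolding geom_threshold_def using \<open>0 < x\<close> x(3) \<psi>_eq[OF x(1)] by (intro the1_equality) simp_all
  then show ?thesis using x(2) by simp
qed

section \<open>A Chernoff bound along a path\<close>

lemma nn_integral_geometric_power:
  fixes q z :: real
  assumes q: "0 < q" "q \<le> 1" and z: "0 \<le> z" "z \<le> 1"
  shows "(\<integral>\<^sup>+ k. ennreal (z ^ k) \<partial>measure_pmf (geometric_pmf q)) = ennreal (q / (1 - (1 - q) * z))"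
proof -
  have "(1 - q) * z \<le> 1 - q" using q z by (intro mult_left_le) auto
  then have "norm ((1 - q) * z) < 1" using q z by simp
  then have sums: "(\<lambda>k. q * ((1 - q) * z) ^ k) sums (q * (1 / (1 - (1 - q) * z)))"
    by (intro sums_mult geometric_sums)
  have "(\<integral>\<^sup>+ k. ennreal (z ^ k) \<partial>measure_pmf (geometric_pmf q)) = (\<Sum>k. ennreal (q * ((1 - q) * z) ^ k))"
    using q z by (simp add: nn_integral_measure_pmf nn_integral_count_space_nat ennreal_mult'[symmetric]
                            power_mult_distrib mult_ac)
  also have "\<dots> = ennreal (q * (1 / (1 - (1 - q) * z)))"
    by (rule suminf_ennreal_eq[OF _ sums]) (use q z in simp)
  finally show ?thesis by simp
qed

lemma inverse_one_minus_exp_le: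
  fixes c :: real assumes "0 < c"
  shows "1 / (1 - exp (- c)) \<le> 1 + 1 / c"
proof -
  have "(c + 1) * exp (- c) \<le> exp c * exp (- c)"
    using exp_ge_add_one_self[of c] by (intro mult_right_mono) (simp_all add: add.commute)
  then have "c \<le> (c + 1) * (1 - exp (- c))" by (simp add: algebra_simps exp_minus)
  then show ?thesis using assms by (simp add: field_simps)
qed

lemma geometric_moment_le:
  fixes q c :: real assumes "0 < q" "q \<le> 1" "0 < c"
  shows "q / (1 - (1 - q) * exp (- c)) \<le> q * (1 + 1 / c)"
proof -
  have pos: "0 < 1 - exp (- c)" using \<open>0 < c\<close> by simp
  moreover have le: "1 - exp (- c) \<le> 1 - (1 - q) * exp (- c)"
    using assms by (simp add: mult_left_le_one_le)
  ultimately have "q / (1 - (1 - q) * exp (- c)) \<le> q / (1 - exp (- c))"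
    using assms by (intro divide_left_mono mult_pos_pos) linarith+
  also have "\<dots> \<le> q * (1 + 1 / c)"
    using inverse_one_minus_exp_le[OF \<open>0 < c\<close>] assms by (simp add: divide_inverse mult_left_mono)
  finally show ?thesis .
qed

text \<open>Chernoff bound for the lower tail of a weighted sum of independent geometric variables,
  via Markov's inequality for exp (t * (1 - X)).\<close>

lemma prob_weighted_geometric_sum_less:
  fixes q t :: real and w :: "'a \<Rightarrow> real"
  assumes "finite V" "0 < q" "q \<le> 1" "0 \<le> t" "\<And>x. 0 \<le> w x"
  shows "measure_pmf.prob (Pi_pmf V 0 (\<lambda>_. geometric_pmf q)) {D. (\<Sum>x\<in>V. w x * D x) < 1}
           \<le> exp t * (\<Prod>x\<in>V. q / (1 - (1 - q) * exp (- t * w x)))"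
proof -
  define M where "M = Pi_pmf V 0 (\<lambda>_. geometric_pmf q)"
  define z where "z x = exp (- t * w x)" for x
  have z: "0 \<le> z x" "z x \<le> 1" for x unfolding z_def using assms(4) assms(5)[of x] by auto
  have G_nn: "0 \<le> q / (1 - (1 - q) * z x)" for x
    using assms(2,3) z[of x] by (simp add: mult_le_one)
  have prod_z: "(\<Prod>x\<in>V. z x ^ D x) = exp (- t * (\<Sum>x\<in>V. w x * D x))" for D :: "'a \<Rightarrow> nat"
    unfolding z_def using assms(1)
    by (simp add: exp_of_nat_mult[symmetric] exp_sum sum_distrib_left mult_ac)
  have markov: "indicator {D. (\<Sum>x\<in>V. w x * real (D x)) < 1} D
                  \<le> ennreal (exp t) * (\<Prod>x\<in>V. ennreal (z x ^ D x))" for D :: "'a \<Rightarrow> nat"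
  proof (cases "(\<Sum>x\<in>V. w x * D x) < 1")
    case True
    then have "1 \<le> exp (t * (1 - (\<Sum>x\<in>V. w x * D x)))" using assms(4) by simp
    also have "\<dots> = exp t * (\<Prod>x\<in>V. z x ^ D x)"
      unfolding prod_z by (simp add: right_diff_distrib exp_diff exp_minus field_simps)
    finally have "(1::ennreal) \<le> ennreal (exp t * (\<Prod>x\<in>V. z x ^ D x))" by simp
    also have "\<dots> = ennreal (exp t) * (\<Prod>x\<in>V. ennreal (z x ^ D x))"
      using z by (simp add: ennreal_mult' prod_ennreal prod_nonneg)
    finally show ?thesis using True by simp
  qed simp
  have "emeasure (measure_pmf M) {D. (\<Sum>x\<in>V. w x * real (D x)) < 1}
          = (\<integral>\<^sup>+ D. indicator {D. (\<Sum>x\<in>V. w x * real (D x)) < 1} D \<partial>measure_pmf M)"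
    by simp
  also have "\<dots> \<le> (\<integral>\<^sup>+ D. ennreal (exp t) * (\<Prod>x\<in>V. ennreal (z x ^ D x)) \<partial>measure_pmf M)"
    by (intro nn_integral_mono markov)
  also have "\<dots> = ennreal (exp t) * (\<Prod>x\<in>V. \<integral>\<^sup>+ k. ennreal (z x ^ k) \<partial>geometric_pmf q)"
    unfolding M_def
    by (simp add: nn_integral_cmult nn_integral_prod_Pi_pmf[OF assms(1), where f = "\<lambda>x k. ennreal (z x ^ k)"])
  also have "\<dots> = ennreal (exp t * (\<Prod>x\<in>V. q / (1 - (1 - q) * z x)))"
    using assms(2,3) z G_nn
    by (simp add: nn_integral_geometric_power ennreal_mult' prod_ennreal prod_nonneg)
  finally show ?thesis
    unfolding M_def z_def using G_nn
    by (simp add: measure_pmf.emeasure_eq_measure prod_nonneg z_def)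
qed

lemma binary_weighted_sum_less_iff:
  "(\<Sum>j<m. a j * 2 ^ (m - 1 - j)) < (2::nat) ^ (m - 1) \<longleftrightarrow> (\<Sum>j<m. a j / 2 ^ j) < (1::real)"
proof -
  have eq: "real (\<Sum>j<m. a j * 2 ^ (m - 1 - j)) = 2 ^ (m - 1) * (\<Sum>j<m. a j / 2 ^ j)"
    unfolding of_nat_sum sum_distrib_left
  proof (intro sum.cong refl)
    fix j assume "j \<in> {..<m}"
    then have "(2::real) ^ (m - 1 - j) * 2 ^ j = 2 ^ (m - 1)" by (simp flip: power_add)
    then show "real (a j * 2 ^ (m - 1 - j)) = 2 ^ (m - 1) * (a j / 2 ^ j)"
      by (simp add: field_simps)
  qed
  have "(\<Sum>j<m. a j * 2 ^ (m - 1 - j)) < (2::nat) ^ (m - 1)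
          \<longleftrightarrow> real (\<Sum>j<m. a j * 2 ^ (m - 1 - j)) < 2 ^ (m - 1)"
    by (simp only: of_nat_less_iff[symmetric, where 'a = real] of_nat_power of_nat_numeral)
  also have "\<dots> \<longleftrightarrow> 2 ^ (m - 1) * (\<Sum>j<m. a j / 2 ^ j) < 2 ^ (m - 1) * (1::real)"
    unfolding eq by simp
  finally show ?thesis by (simp only: mult_less_cancel_left_pos zero_less_power zero_less_numeral)
qed

lemma prob_path_weight_less:
  fixes q :: real
  assumes V: "finite V" and us: "distinct us" "length us = m" "set us \<subseteq> V"
    and q: "0 < q" "q \<le> 1" and "0 < m"
  shows "measure_pmf.prob (Pi_pmf V 0 (\<lambda>_. geometric_pmf q))
           {D. (\<Sum>j<m. D (us ! j) * 2 ^ (m - 1 - j)) < (2::nat) ^ (m - 1)}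
         \<le> exp m * (\<Prod>j<m. q * (1 + 2 ^ j / m))"
proof -
  define w where "w x = (\<Sum>j<m. if us ! j = x then 1 / 2 ^ j else 0::real)" for x
  define G where "G x = q / (1 - (1 - q) * exp (- m * w x))" for x
  have w_nn: "0 \<le> w x" for x unfolding w_def by (intro sum_nonneg) auto
  have G_nn: "0 \<le> G x" for x
  proof -
    have "(1 - q) * exp (- m * w x) \<le> 1" using q w_nn[of x] by (intro mult_le_one) auto
    then show ?thesis unfolding G_def using q by simp
  qed
  have w_nth: "w (us ! j) = 1 / 2 ^ j" if "j < m" for j
    using us that unfolding w_def by (simp add: nth_eq_iff_index_eq if_distrib cong: if_cong)
  have w_out: "w x = 0" if "x \<notin> set us" for x
    using us that unfolding w_def by (intro sum.neutral) auto
  have "(\<Sum>x\<in>V. w x * D x) = (\<Sum>j<m. real (D (us ! j)) / 2 ^ j)" for D :: "'a \<Rightarrow> nat"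
  proof -
    have "(\<Sum>x\<in>V. w x * D x) = (\<Sum>j<m. \<Sum>x\<in>V. if us ! j = x then real (D x) / 2 ^ j else 0)"
      unfolding w_def sum_distrib_right by (subst sum.swap) (intro sum.cong refl; simp)
    also have "\<dots> = (\<Sum>j<m. real (D (us ! j)) / 2 ^ j)"
      using V us by (intro sum.cong refl) (auto simp: sum.delta nth_mem subsetD)
    finally show ?thesis .
  qed
  then have "measure_pmf.prob (Pi_pmf V 0 (\<lambda>_. geometric_pmf q))
           {D. (\<Sum>j<m. D (us ! j) * 2 ^ (m - 1 - j)) < (2::nat) ^ (m - 1)}
         \<le> exp m * (\<Prod>x\<in>V. G x)"
    using prob_weighted_geometric_sum_less[OF V q, of m w] w_nn
    unfolding G_def binary_weighted_sum_less_iff by simp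
  also have "(\<Prod>x\<in>V. G x) = (\<Prod>x\<in>set us. G x)"
    using w_out q by (intro prod.mono_neutral_right[OF V us(3)]) (simp add: G_def)
  also have "\<dots> = (\<Prod>j<m. G (us ! j))"
    by (rule prod.reindex_bij_betw[symmetric], rule bij_betw_nth) (use us in auto)
  also have "\<dots> \<le> (\<Prod>j<m. q * (1 + 2 ^ j / m))"
  proof (rule prod_mono)
    fix j assume "j \<in> {..<m}"
    then have "G (us ! j) = q / (1 - (1 - q) * exp (- (m / 2 ^ j)))" unfolding G_def by (simp add: w_nth)
    also have "\<dots> \<le> q * (1 + 2 ^ j / m)" using geometric_moment_le[OF q, of "m / 2 ^ j"] \<open>0 < m\<close> by simp
    finally show "0 \<le> G (us ! j) \<and> G (us ! j) \<le> q * (1 + 2 ^ j / m)" using G_nn by simp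
  qed
  finally show ?thesis by (simp add: mult_left_mono)
qed

section \<open>The probability of unsolvability\<close>

lemma path_weight_less_if_not_pebblable:
  assumes "path_from E V r us" "length us = m" "0 < m" "\<not> pebblable E D r"
  shows "(\<Sum>j<m. D (us ! j) * 2 ^ (m - 1 - j)) < 2 ^ (m - 1)"
proof -
  have "{..<m} = {..m - 1}" using \<open>0 < m\<close> by auto
  then show ?thesis
    using pebblable_along_walk[of us "m - 1" E D] assms by (auto simp: path_from_def not_le)
qed

lemma unsolvable_cases:
  assumes G: "simple_graph V E" "connected_graph V E" and "\<not> solvable V E D" "0 < m"
  obtains "\<forall>v\<in>V. D v < 2 ^ (m - 2)"
    | r where "r \<in> V" "\<exists>us. path_from E V r us \<and> length us = m"
        "\<And>us. path_from E V r us \<Longrightarrow> length us = m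
                 \<Longrightarrow> (\<Sum>j<m. D (us ! j) * 2 ^ (m - 1 - j)) < 2 ^ (m - 1)"
proof -
  obtain r where r: "r \<in> V" "\<not> pebblable E D r" using assms(3) unfolding solvable_def by blast
  show thesis
  proof (cases "\<exists>us. path_from E V r us \<and> length us = m")
    case True
    then show thesis using that(2)[OF r(1)] path_weight_less_if_not_pebblable \<open>0 < m\<close> r(2) by blast
  next
    case False
    then show thesis using that(1) pebblable_if_no_long_path[OF G r(1) _ \<open>0 < m\<close>] r(2)
      by (meson not_le)
  qed
qed

lemma prob_geometric_all_less:
  fixes q :: real
  assumes "finite V" "0 < q" "q \<le> 1"
  shows "measure_pmf.prob (Pi_pmf V 0 (\<lambda>_. geometric_pmf q)) (Pi V (\<lambda>_. {..<K}))
           = (1 - (1 - q) ^ K) ^ card V"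
  using assms
  by (simp add: measure_Pi_pmf_Pi measure_measure_pmf_finite sum_distrib_left[symmetric]
                mult.commute[of _ q] sum_gp_strict)

lemma unsolvable_prob_le:
  fixes q :: real
  assumes G: "simple_graph V E" "connected_graph V E" and q: "0 < q" "q \<le> 1" and "0 < m"
  shows "1 - solv_prob V E q \<le> (1 - (1 - q) ^ 2 ^ (m - 2)) ^ card V
           + card V * (exp m * (\<Prod>j<m. q * (1 + 2 ^ j / m)))"
proof -
  define M where "M = Pi_pmf V 0 (\<lambda>_. geometric_pmf q)"
  have fV: "finite V" using G(1) unfolding simple_graph_def by blast
  define A where "A = Pi V (\<lambda>_. {..<(2::nat) ^ (m - 2)})"
  define R where "R = {r\<in>V. \<exists>us. path_from E V r us \<and> length us = m}"
  define p where "p r = (SOME us. path_from E V r us \<and> length us = m)" for r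
  define B where "B us = {D. (\<Sum>j<m. D (us ! j) * 2 ^ (m - 1 - j)) < (2::nat) ^ (m - 1)}" for us :: "nat list"
  define \<beta> where "\<beta> = exp m * (\<Prod>j<m. q * (1 + 2 ^ j / m))"
  have p: "path_from E V r (p r)" "length (p r) = m" if "r \<in> R" for r
    using that someI_ex[of "\<lambda>us. path_from E V r us \<and> length us = m"] unfolding R_def p_def by auto
  have "UNIV - {D. solvable V E D} \<subseteq> A \<union> (\<Union>r\<in>R. B (p r))"
  proof
    fix D assume "D \<in> UNIV - {D. solvable V E D}"
    then have "\<not> solvable V E D" by simp
    then show "D \<in> A \<union> (\<Union>r\<in>R. B (p r))"
    proof (rule unsolvable_cases[OF G _ \<open>0 < m\<close>])
      assume "\<forall>v\<in>V. D v < 2 ^ (m - 2)"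
      then show ?thesis unfolding A_def by auto
    next
      fix r assume "r \<in> V" "\<exists>us. path_from E V r us \<and> length us = m"
        "\<And>us. path_from E V r us \<Longrightarrow> length us = m
                 \<Longrightarrow> (\<Sum>j<m. D (us ! j) * 2 ^ (m - 1 - j)) < 2 ^ (m - 1)"
      then show ?thesis using p[of r] unfolding R_def B_def by blast
    qed
  qed
  then have "1 - solv_prob V E q \<le> measure_pmf.prob M (A \<union> (\<Union>r\<in>R. B (p r)))"
    unfolding solv_prob_def M_def
    by (simp add: measure_pmf.prob_compl[symmetric] measure_pmf.finite_measure_mono)
  also have "\<dots> \<le> measure_pmf.prob M A + (\<Sum>r\<in>R. measure_pmf.prob M (B (p r)))"
    using measure_pmf.finite_measure_subadditive_finite[of R "\<lambda>r. B (p r)" M] fV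
    by (intro order_trans[OF measure_Un_le] add_left_mono) (auto simp: R_def)
  also have "(\<Sum>r\<in>R. measure_pmf.prob M (B (p r))) \<le> card V * \<beta>"
  proof -
    have "measure_pmf.prob M (B (p r)) \<le> \<beta>" if "r \<in> R" for r
      using prob_path_weight_less[OF fV _ _ _ q \<open>0 < m\<close>] p[OF that]
      unfolding M_def B_def \<beta>_def path_from_def by blast
    then have "(\<Sum>r\<in>R. measure_pmf.prob M (B (p r))) \<le> card R * \<beta>"
      by (rule sum_bounded_above)
    moreover have "card R \<le> card V" using fV unfolding R_def by (intro card_mono) auto
    moreover have "0 \<le> \<beta>" unfolding \<beta>_def using q by (intro mult_nonneg_nonneg prod_nonneg) auto
    ultimately show ?thesis by (meson mult_right_mono of_nat_le_iff order_trans)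
  qed
  also have "measure_pmf.prob M A = (1 - (1 - q) ^ 2 ^ (m - 2)) ^ card V"
    unfolding M_def A_def by (rule prob_geometric_all_less[OF fV q])
  finally show ?thesis unfolding \<beta>_def by simp
qed

section \<open>Asymptotics\<close>

text \<open>For L = log2 n, threshold_coeff L * n is the bound of the theorem.\<close>

definition threshold_coeff :: "real \<Rightarrow> real" where
  "threshold_coeff L = 2 powr sqrt (2 * L) * exp 1 / (2 * sqrt L) * inverse (1 - L powr (-1/4))"

lemma ln_one_plus_le:
  fixes y :: real assumes "0 \<le> y"
  shows "ln (1 + y) \<le> 4 * sqrt (sqrt y)"
proof -
  define u where "u = sqrt (sqrt y)"
  have "0 \<le> u" unfolding u_def using assms by simp
  have "u ^ 4 = (u ^ 2) ^ 2" by (simp flip: power_mult)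
  also have "\<dots> = y" unfolding u_def using assms by simp
  finally have "1 + y = 1 + u ^ 4" by simp
  also have "\<dots> \<le> (1 + u) ^ 4"
    using \<open>0 \<le> u\<close> by (simp add: power2_eq_square power3_eq_cube power4_eq_xxxx algebra_simps)
  also have "\<dots> \<le> exp u ^ 4" using \<open>0 \<le> u\<close> exp_ge_add_one_self[of u] by (intro power_mono) auto
  also have "\<dots> = exp (4 * u)" by (simp add: exp_of_nat_mult[symmetric])
  finally have "ln (1 + y) \<le> ln (exp (4 * u))" using assms by (intro ln_mono) auto
  then show ?thesis unfolding u_def by simp
qed

lemma ln_prod_one_plus_power_two_le:
  fixes m :: nat assumes "0 < m"
  shows "ln (\<Prod>j<m. 1 + 2 ^ j / m) \<le>
           ln 2 * (real m * (real m - 1) / 2) - m * ln m + 4 / (1 - 1 / sqrt (sqrt 2)) * sqrt (sqrt m)"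
proof -
  define r :: real where "r = 1 / sqrt (sqrt 2)"
  have r: "0 < r" "r < 1" unfolding r_def by auto
  have pos: "0 < 1 + 2 ^ j / real m" for j by (simp add: add_pos_nonneg)
  have "ln (\<Prod>j<m. 1 + 2 ^ j / m) = (\<Sum>j<m. ln (1 + 2 ^ j / m))"
    using pos by (intro ln_prod) (auto simp: less_imp_neq[symmetric])
  also have "\<dots> \<le> (\<Sum>j<m. j * ln 2 - ln m + 4 * sqrt (sqrt m) * r ^ j)"
  proof (rule sum_mono)
    fix j :: nat
    have "1 + 2 ^ j / real m = (2 ^ j / m) * (1 + m / 2 ^ j)" using assms by (simp add: field_simps)
    moreover have "0 < 1 + m / 2 ^ j" by (simp add: add_pos_nonneg)
    ultimately have "ln (1 + 2 ^ j / real m) = j * ln 2 - ln m + ln (1 + m / 2 ^ j)"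
      using assms by (simp add: ln_mult ln_div ln_realpow)
    also have "ln (1 + m / 2 ^ j) \<le> 4 * sqrt (sqrt (m / 2 ^ j))" by (rule ln_one_plus_le) simp
    also have "sqrt (sqrt (m / 2 ^ j)) = sqrt (sqrt m) * r ^ j"
      unfolding r_def by (simp add: real_sqrt_divide real_sqrt_power power_divide)
    finally show "ln (1 + 2 ^ j / real m) \<le> j * ln 2 - ln m + 4 * sqrt (sqrt m) * r ^ j" by simp
  qed
  also have "\<dots> = ln 2 * (\<Sum>j<m. real j) - m * ln m + 4 * sqrt (sqrt m) * (\<Sum>j<m. r ^ j)"
    by (simp add: sum.distrib sum_subtractf sum_distrib_left sum_distrib_right mult_ac)
  also have "(\<Sum>j<m. real j) = real m * (real m - 1) / 2" by (induction m) (auto simp: field_simps)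
  also have "(\<Sum>j<m. r ^ j) \<le> 1 / (1 - r)"
    using r by (simp add: sum_gp_strict divide_right_mono)
  finally show ?thesis unfolding r_def by (simp add: mult_left_mono)
qed

lemma threshold_coeff_pos: "1 < L \<Longrightarrow> 0 < threshold_coeff L"
  unfolding threshold_coeff_def using powr_less_one[of L "-1/4"] by simp

lemma threshold_coeff_ge:
  assumes "1 < L"
  shows "2 powr sqrt (2 * L) / (2 * sqrt L) \<le> threshold_coeff L"
proof -
  have "0 < L powr (-1/4)" "L powr (-1/4) < 1" using powr_less_one[of L "-1/4"] assms by auto
  then have "1 \<le> inverse (1 - L powr (-1/4))" by (simp add: field_simps)
  moreover have "1 \<le> exp (1::real)" by simp
  ultimately have "1 * 1 \<le> exp (1::real) * inverse (1 - L powr (-1/4))" by (intro mult_mono) auto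
  then have "2 powr sqrt (2 * L) / (2 * sqrt L) * 1
               \<le> 2 powr sqrt (2 * L) / (2 * sqrt L) * (exp 1 * inverse (1 - L powr (-1/4)))"
    using assms by (intro mult_left_mono) auto
  also have "\<dots> = threshold_coeff L"
    unfolding threshold_coeff_def by (simp only: divide_inverse mult_ac)
  finally show ?thesis by simp
qed

lemma ln_threshold_coeff:
  fixes L :: real assumes "1 < L"
  shows "ln (threshold_coeff L)
           = sqrt (2 * L) * ln 2 + 1 - ln 2 - ln L / 2 - ln (1 - L powr (-1/4))"
proof -
  have "L powr (-1/4) < 1" using assms by (intro powr_less_one) auto
  then show ?thesis
    unfolding threshold_coeff_def using assms by (simp add: ln_mult ln_div ln_inverse ln_sqrt)
qed

lemma ln_path_term_le:
  fixes L :: real and m :: nat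
  defines "S \<equiv> sqrt (2 * L)" and "a \<equiv> L powr (-1/4)"
  assumes "1 < L" "0 < m"
  shows "ln (2 powr L * (exp m * (inverse (1 + threshold_coeff L) ^ m * (\<Prod>j<m. 1 + 2 ^ j / m))))
           \<le> ln 2 * ((S - real m) ^ 2 / 2) + m * (ln S - ln m) + m * ln (1 - a)
              + 4 / (1 - 1 / sqrt (sqrt 2)) * sqrt (sqrt m)"
proof -
  define t where "t = threshold_coeff L"
  have "0 < t" unfolding t_def using threshold_coeff_pos \<open>1 < L\<close> .
  define P where "P = (\<Prod>j<m. 1 + 2 ^ j / real m)"
  have "0 < P" unfolding P_def by (intro prod_pos) (auto simp: add_pos_nonneg)
  then have "ln (2 powr L * (exp m * (inverse (1 + t) ^ m * P))) = L * ln 2 + m - m * ln (1 + t) + ln P"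
    using \<open>0 < t\<close> by (simp add: ln_mult ln_realpow ln_inverse)
  then have "ln (2 powr L * (exp m * (inverse (1 + t) ^ m * (\<Prod>j<m. 1 + 2 ^ j / m))))
               = L * ln 2 + m - m * ln (1 + t) + ln (\<Prod>j<m. 1 + 2 ^ j / m)"
    unfolding P_def .
  also have "\<dots> \<le> L * ln 2 + m - m * ln t
                   + (ln 2 * (real m * (real m - 1) / 2) - m * ln m)
                   + 4 / (1 - 1 / sqrt (sqrt 2)) * sqrt (sqrt m)"
  proof -
    have "m * ln t \<le> m * ln (1 + t)" using \<open>0 < t\<close> by (intro mult_left_mono) auto
    then show ?thesis using ln_prod_one_plus_power_two_le[OF \<open>0 < m\<close>] by linarith
  qed
  also have "\<dots> = ln 2 * ((S - real m) ^ 2 / 2) + m * (ln S - ln m) + m * ln (1 - a)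
                   + 4 / (1 - 1 / sqrt (sqrt 2)) * sqrt (sqrt m)"
  proof -
    have S2: "S ^ 2 = 2 * L" and "0 < S" unfolding S_def using assms by simp_all
    then have "ln (S ^ 2) = ln (2 * L)" by simp
    then have lnL: "ln L = 2 * ln S - ln 2" using \<open>0 < S\<close> assms(3) by (simp add: ln_realpow ln_mult)
    have L2: "L * ln 2 = S ^ 2 / 2 * ln 2" using S2 by simp
    have "L * ln 2 + m - m * ln t + (ln 2 * (real m * (real m - 1) / 2) - m * ln m)
            = ln 2 * ((S - real m) ^ 2 / 2) + m * (ln S - ln m) + m * ln (1 - a)"
      unfolding t_def ln_threshold_coeff[OF \<open>1 < L\<close>] S_def[symmetric] a_def[symmetric] lnL L2
      by (simp add: field_simps power2_eq_square)
    then show ?thesis by simp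
  qed
  finally show ?thesis unfolding t_def .
qed

lemma path_term_le:
  fixes L :: real
  defines "m \<equiv> nat \<lfloor>sqrt (2 * L)\<rfloor>"
  assumes "16 \<le> L"
    and asymp: "ln 2 / 2 + 1 + ln 4 + 4 / (1 - 1 / sqrt (sqrt 2)) * sqrt (sqrt (sqrt (2 * L)))
                  \<le> (sqrt (2 * L) - 1) * L powr (-1/4)"
  shows "2 powr L * (exp m * (\<Prod>j<m. inverse (1 + threshold_coeff L) * (1 + 2 ^ j / m))) \<le> 1/4"
proof -
  define S where "S = sqrt (2 * L)"
  define a where "a = L powr (-1/4)"
  define C :: real where "C = 4 / (1 - 1 / sqrt (sqrt 2))"
  define T where "T = 2 powr L * (exp m * (\<Prod>j<m. inverse (1 + threshold_coeff L) * (1 + 2 ^ j / m)))"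
  have "sqrt 32 \<le> S" unfolding S_def using assms(2) by simp
  moreover have "(5::real) \<le> sqrt 32" by (simp add: real_le_rsqrt)
  ultimately have "5 \<le> S" by linarith
  have "real m = of_int \<lfloor>S\<rfloor>" unfolding m_def S_def[symmetric] using \<open>5 \<le> S\<close> by simp
  then have mS: "real m \<le> S" "S < real m + 1" by (simp_all add: of_int_floor_le)
  then have "1 \<le> real m" using \<open>5 \<le> S\<close> by linarith
  have a: "0 < a" "a < 1" unfolding a_def using assms(2) by (auto intro: powr_less_one)
  have "0 < threshold_coeff L" using threshold_coeff_pos assms(2) by simp
  then have "0 < T" unfolding T_def by (intro mult_pos_pos prod_pos) (auto simp: add_pos_nonneg)
  have "ln T \<le> ln 2 * ((S - real m) ^ 2 / 2) + m * (ln S - ln m) + m * ln (1 - a) + C * sqrt (sqrt m)"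
    using ln_path_term_le[of L m] assms(2) \<open>1 \<le> real m\<close>
    unfolding T_def S_def a_def C_def by (simp add: prod.distrib)
  also have "\<dots> \<le> ln 2 / 2 + 1 - (S - 1) * a + C * sqrt (sqrt (sqrt (2 * L)))"
  proof -
    have "(S - real m) ^ 2 \<le> 1" using mS by (simp add: power_le_one)
    then have t1: "ln 2 * ((S - real m) ^ 2 / 2) \<le> ln 2 / 2" by simp
    have "m * (ln S - ln m) \<le> m * (S / m - 1)"
      using ln_le_minus_one[of "S / m"] \<open>1 \<le> real m\<close> mS by (intro mult_left_mono) (simp_all add: ln_div)
    moreover have "m * (S / m - 1) = S - m" using \<open>1 \<le> real m\<close> by (simp add: field_simps)
    ultimately have t2: "m * (ln S - ln m) \<le> 1" using mS by linarith
    have "m * ln (1 - a) \<le> m * (- a)"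
      using ln_le_minus_one[of "1 - a"] a by (intro mult_left_mono) auto
    also have "\<dots> \<le> (S - 1) * (- a)" using mS a by (intro mult_right_mono_neg) auto
    finally have t3: "m * ln (1 - a) \<le> - ((S - 1) * a)" by simp
    have "0 \<le> C" unfolding C_def by (simp add: field_simps)
    then have t4: "C * sqrt (sqrt m) \<le> C * sqrt (sqrt (sqrt (2 * L)))"
      using mS unfolding S_def by (intro mult_left_mono) auto
    show ?thesis using t1 t2 t3 t4 by linarith
  qed
  also have "\<dots> \<le> - ln 4" using asymp unfolding C_def a_def S_def by linarith
  finally have "T \<le> exp (- ln 4)" using \<open>0 < T\<close> by (metis exp_ln exp_le_cancel_iff)
  then show ?thesis unfolding T_def by (simp add: exp_minus)
qed

lemma geometric_tail_ge:
  fixes L :: real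
  defines "m \<equiv> nat \<lfloor>sqrt (2 * L)\<rfloor>"
  assumes "16 \<le> L"
  shows "exp (- sqrt L) \<le> (1 - inverse (1 + threshold_coeff L)) ^ 2 ^ (m - 2)"
proof -
  define S where "S = sqrt (2 * L)"
  define t where "t = threshold_coeff L"
  define K :: nat where "K = 2 ^ (m - 2)"
  have "sqrt 32 \<le> S" unfolding S_def using assms(2) by simp
  moreover have "(2::real) \<le> sqrt 32" by (simp add: real_le_rsqrt)
  ultimately have "2 \<le> S" by linarith
  have "0 < sqrt L" using assms(2) by simp
  have "2 \<le> m" unfolding m_def S_def[symmetric] using \<open>2 \<le> S\<close> by linarith
  have "real K * 4 = 2 ^ m"
  proof -
    have "m - 2 + 2 = m" using \<open>2 \<le> m\<close> by simp
    then have "(2::real) ^ (m - 2) * 2 ^ 2 = 2 ^ m" unfolding power_add[symmetric] by simp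
    then show ?thesis unfolding K_def by simp
  qed
  also have "\<dots> \<le> 2 powr S"
    unfolding m_def S_def[symmetric] using \<open>2 \<le> S\<close> by (simp add: powr_realpow[symmetric] of_nat_floor)
  finally have K: "real K \<le> 2 powr S / 4" by simp
  have "2 powr S / (2 * sqrt L) \<le> t"
    unfolding S_def t_def using assms(2) by (intro threshold_coeff_ge) simp
  moreover have "0 < 2 powr S / (2 * sqrt L)" using \<open>0 < sqrt L\<close> by simp
  ultimately have "real K / t \<le> (2 powr S / 4) / (2 powr S / (2 * sqrt L))"
    using K by (intro frac_le) auto
  also have "\<dots> = sqrt L / 2" using \<open>0 < sqrt L\<close> by (simp add: field_simps)
  finally have "real K / t \<le> sqrt L" using \<open>0 < sqrt L\<close> by linarith
  have "0 < t" unfolding t_def using threshold_coeff_pos assms(2) by simp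
  then have q: "1 - inverse (1 + t) = inverse (1 + 1 / t)" "0 < 1 - inverse (1 + t)"
    by (simp_all add: field_simps)
  have "- (1 / t) \<le> ln (1 - inverse (1 + t))"
    using ln_add_one_self_le_self[of "1 / t"] \<open>0 < t\<close> unfolding q(1) by (simp add: ln_inverse)
  then have "real K * (- (1 / t)) \<le> real K * ln (1 - inverse (1 + t))"
    by (intro mult_left_mono) auto
  with \<open>real K / t \<le> sqrt L\<close> have "exp (- sqrt L) \<le> exp (real K * ln (1 - inverse (1 + t)))"
    by simp
  also have "\<dots> = (1 - inverse (1 + t)) ^ K" using q(2) by (simp add: ln_realpow[symmetric])
  finally show ?thesis unfolding t_def K_def .
qed

lemma no_path_term_le:
  fixes L :: real and N :: nat
  defines "m \<equiv> nat \<lfloor>sqrt (2 * L)\<rfloor>"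
  assumes "16 \<le> L" "real N = 2 powr L" and asymp: "2 \<le> 2 powr L * exp (- sqrt L)"
  shows "(1 - (1 - inverse (1 + threshold_coeff L)) ^ 2 ^ (m - 2)) ^ N \<le> 1/4"
proof -
  define x where "x = (1 - inverse (1 + threshold_coeff L)) ^ 2 ^ (m - 2)"
  have "exp (- sqrt L) \<le> x" unfolding x_def m_def by (rule geometric_tail_ge[OF assms(2)])
  moreover have "x \<le> 1"
  proof -
    have "0 < threshold_coeff L" using threshold_coeff_pos assms(2) by simp
    then have "0 < inverse (1 + threshold_coeff L)" "inverse (1 + threshold_coeff L) \<le> 1"
      by (auto simp: field_simps)
    then show ?thesis unfolding x_def by (intro power_le_one) auto
  qed
  ultimately have "(1 - x) ^ N \<le> exp (- x) ^ N"
    using exp_ge_add_one_self[of "- x"] by (intro power_mono) auto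
  also have "\<dots> = exp (- (N * x))" by (simp add: exp_of_nat_mult[symmetric])
  also have "\<dots> \<le> exp (- 2)"
  proof -
    have "2 powr L * exp (- sqrt L) \<le> 2 powr L * x"
      using \<open>exp (- sqrt L) \<le> x\<close> by (intro mult_left_mono) auto
    then have "2 \<le> N * x" using asymp unfolding assms(3) by linarith
    then show ?thesis by simp
  qed
  also have "\<dots> \<le> 1/4"
  proof -
    have "(2::real) ^ 2 \<le> exp 1 ^ 2" using exp_ge_add_one_self[of 1] by (intro power_mono) auto
    then show ?thesis by (simp add: exp_minus field_simps flip: exp_of_nat_mult)
  qed
  finally show ?thesis unfolding x_def .
qed

lemma solv_prob_ge_half:
  assumes G: "simple_graph V E" "connected_graph V E" and L: "L = log 2 (card V)" "16 \<le> L"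
    and asymp1: "ln 2 / 2 + 1 + ln 4 + 4 / (1 - 1 / sqrt (sqrt 2)) * sqrt (sqrt (sqrt (2 * L)))
                  \<le> (sqrt (2 * L) - 1) * L powr (-1/4)"
    and asymp2: "2 \<le> 2 powr L * exp (- sqrt L)"
  shows "1/2 \<le> solv_prob V E (inverse (1 + threshold_coeff L))"
proof -
  define m where "m = nat \<lfloor>sqrt (2 * L)\<rfloor>"
  define q where "q = inverse (1 + threshold_coeff L)"
  have "0 < threshold_coeff L" using threshold_coeff_pos L(2) by simp
  then have q: "0 < q" "q \<le> 1" unfolding q_def by (auto simp: field_simps)
  have "4 \<le> sqrt (2 * L)" using L(2) real_le_rsqrt[of 4 "2 * L"] by simp
  then have "0 < m" unfolding m_def by linarith
  have "0 < card V" using L G(1) by (auto simp: card_gt_0_iff simple_graph_def log_def)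
  then have "real (card V) = 2 powr L" using L(1) by simp
  then have "1 - solv_prob V E q \<le> 1/4 + 1/4"
    using unsolvable_prob_le[OF G q \<open>0 < m\<close>]
      no_path_term_le[OF L(2) _ asymp2, of "card V"] path_term_le[OF L(2) asymp1]
    unfolding m_def q_def by (smt (verit))
  then show ?thesis unfolding q_def by simp
qed

lemma eventually_solv_prob_ge_half:
  "eventually (\<lambda>n. 1 < log 2 n \<and> (\<forall>V E. simple_graph V E \<and> connected_graph V E \<and> card V = n
       \<longrightarrow> 1/2 \<le> solv_prob V E (inverse (1 + threshold_coeff (log 2 n))))) sequentially"
proof -
  have "filterlim (\<lambda>n::nat. log 2 n) at_top sequentially" by real_asymp
  moreover have "eventually (\<lambda>L::real. 16 \<le> L
      \<and> ln 2 / 2 + 1 + ln 4 + 4 / (1 - 1 / sqrt (sqrt 2)) * sqrt (sqrt (sqrt (2 * L)))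
          \<le> (sqrt (2 * L) - 1) * L powr (-1/4)
      \<and> 2 \<le> 2 powr L * exp (- sqrt L)) at_top"
    by (intro eventually_conj eventually_ge_at_top) real_asymp+
  ultimately have "eventually (\<lambda>n::nat. 16 \<le> log 2 n
      \<and> ln 2 / 2 + 1 + ln 4 + 4 / (1 - 1 / sqrt (sqrt 2)) * sqrt (sqrt (sqrt (2 * log 2 n)))
          \<le> (sqrt (2 * log 2 n) - 1) * log 2 n powr (-1/4)
      \<and> 2 \<le> 2 powr log 2 n * exp (- sqrt (log 2 n))) sequentially"
    by (rule eventually_compose_filterlim[rotated])
  then show ?thesis
  proof eventually_elim
    case (elim n)
    have "1/2 \<le> solv_prob V E (inverse (1 + threshold_coeff (log 2 n)))"
      if "simple_graph V E" "connected_graph V E" "card V = n" for V E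
      by (intro solv_prob_ge_half[OF that(1,2)]) (use elim that(3) in simp_all)
    then show ?case using elim by auto
  qed
qed

theorem theorem25:
  "\<exists>n0::nat. n0 \<ge> 3 \<and>
    (\<forall>(V::nat set) (E::nat \<Rightarrow> nat \<Rightarrow> bool).
       simple_graph V E \<and> connected_graph V E \<and> card V \<ge> n0 \<longrightarrow>
       (let n = real (card V); L = log 2 n in
        geom_threshold V E \<le>
          (2 powr sqrt (2 * L) * exp 1 / (2 * sqrt L)) *
          inverse (1 - L powr (-1/4)) * n))"
proof -
  obtain N where N: "\<And>n. N \<le> n \<Longrightarrow> 1 < log 2 n \<and> (\<forall>V E. simple_graph V E \<and> connected_graph V E
      \<and> card V = n \<longrightarrow> 1/2 \<le> solv_prob V E (inverse (1 + threshold_coeff (log 2 n))))"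
    using eventually_solv_prob_ge_half unfolding eventually_sequentially by blast
  show ?thesis
  proof (intro exI[of _ "max 3 N"] conjI allI impI)
    fix V E assume G: "simple_graph V E \<and> connected_graph V E \<and> max 3 N \<le> card V"
    define L where "L = log 2 (card V)"
    have "1 < L" "1/2 \<le> solv_prob V E (inverse (1 + threshold_coeff L))"
      using N[of "card V"] G unfolding L_def by auto
    moreover have "0 < card V" "V \<noteq> {}" using G by auto
    ultimately have "geom_threshold V E \<le> threshold_coeff L * card V"
      using G threshold_coeff_pos[of L] by (intro geom_threshold_le) auto
    then show "let n = real (card V); L = log 2 n in geom_threshold V E
        \<le> (2 powr sqrt (2 * L) * exp 1 / (2 * sqrt L)) * inverse (1 - L powr (-1/4)) * n"
      unfolding Let_def L_def threshold_coeff_def .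
  qed simp
qed

end
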